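(* Let $\tau>0$, $T=\tau$, $H\in(1/2,1)$, $\lambda\in(1/2,H)$, and let $B^H$ be a fractional Brownian motion on $[0,T]$ with Hurst parameter $H$; fix a path of $B^H$ which is $\lambda$-Hölder continuous on $[0,T]$ and write $\|B^H\|_\lambda$ for its $\lambda$-Hölder seminorm on $[0,T]$. Let $\xi\in C^\lambda([-\tau,0];\mathbb{R})$ and let $f:C^\lambda([-\tau,0];\mathbb{R})\to\mathbb{R}$ satisfy $|f(\psi_2)-f(\psi_1)|\le M_1\|\psi_2-\psi_1\|$ for all $\psi_1,\psi_2\in C^\lambda([-\tau,0];\mathbb{R})$, for some constant $M_1>0$. Let $n>\tau$ be an integer, $\Delta=\tau/n$, $t_k=k\Delta$ for $k=-n,\dots,n$, and let $X^{(n)}$ be the Euler scheme $$X^{(n)}(t)=\xi(t),\ t\in[-\tau,0];\qquad X^{(n)}(t)=X^{(n)}(t_k)+f(\overline X^{(n)}_{t_k})\,(B^H(t)-B^H(t_k)),\ t\in[t_k,t_{k+1}],\ k=0,\dots,n-1.$$ For $s\le t$ in $\{t_0,\dots,t_n\}$ define $R^n(s,t)=X^{(n)}(t)-X^{(n)}(s)-f(\overline X^{(n)}_s)(B^H(t)-B^H(s))$. Then for all $s\le u\le t$ in $\{t_0,\dots,t_n\}$, $$|R^n(s,t)-R^n(s,u)-R^n(u,t)|\le M_1\,\|\overline X^{(n)}_u-\overline X^{(n)}_s\|\,\|B^H\|_\lambda\,|t-s|^\lambda.$$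
   Context: $\|\cdot\|$ denotes the supremum norm on $[-\tau,0]$. For $t\in[0,T]$, the segment $\overline X^{(n)}_t:[-\tau,0]\to\mathbb{R}$ is $\overline X^{(n)}_t(\theta)=X^{(n)}(t+\theta)$. $C^\lambda([-\tau,0];\mathbb{R})$ is the space of $\lambda$-Hölder continuous real functions on $[-\tau,0]$. *)

theory Defs
  imports "HOL-Analysis.Analysis"
begin

definition holder_on :: "real \<Rightarrow> real set \<Rightarrow> (real \<Rightarrow> real) \<Rightarrow> bool" where
  "holder_on lam S g \<longleftrightarrow> (\<exists>C. \<forall>s\<in>S. \<forall>t\<in>S. \<bar>g t - g s\<bar> \<le> C * \<bar>t - s\<bar> powr lam)"

definition holder_seminorm :: "real \<Rightarrow> real set \<Rightarrow> (real \<Rightarrow> real) \<Rightarrow> real" where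
  "holder_seminorm lam S g =
     Sup {\<bar>g t - g s\<bar> / \<bar>t - s\<bar> powr lam | s t. s \<in> S \<and> t \<in> S \<and> s \<noteq> t}"

definition supnorm :: "real \<Rightarrow> (real \<Rightarrow> real) \<Rightarrow> real" where
  "supnorm tau \<psi> = Sup ((\<lambda>\<theta>. \<bar>\<psi> \<theta>\<bar>) ` {-tau..0})"

definition seg :: "(real \<Rightarrow> real) \<Rightarrow> real \<Rightarrow> (real \<Rightarrow> real)" where
  "seg X t = (\<lambda>\<theta>. X (t + \<theta>))"

definition remR :: "((real \<Rightarrow> real) \<Rightarrow> real) \<Rightarrow> (real \<Rightarrow> real) \<Rightarrow> (real \<Rightarrow> real) \<Rightarrow> real \<Rightarrow> real \<Rightarrow> real" where
  "remR f B X s t = X t - X s - f (seg X s) * (B t - B s)"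

end

theory Submission
  imports Defs
begin

text \<open>The defect of the remainder is (f(X_u) - f(X_s)) (B(t) - B(u)), so the Lipschitz bound on f
  and the Hoelder bound on B give the estimate. The only work is to justify applying the Lipschitz
  hypothesis, which is restricted to Hoelder continuous arguments: the Euler scheme is, on each step,
  a constant multiple of B plus a constant, so it is Hoelder continuous on [-tau, tau] by gluing the
  steps to the initial segment, and then so are all of its segments.\<close>

lemma remR_three_point:
  "remR f B X s t - remR f B X s u - remR f B X u t = (f (seg X u) - f (seg X s)) * (B t - B u)"
  unfolding remR_def by (simp add: algebra_simps)

lemma holder_on_subset: "holder_on lam S g \<Longrightarrow> T \<subseteq> S \<Longrightarrow> holder_on lam T g"
  unfolding holder_on_def by blast

lemma holder_on_nonneg_const:
  assumes "holder_on lam S g"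
  obtains C where "C \<ge> 0" "\<forall>s\<in>S. \<forall>t\<in>S. \<bar>g t - g s\<bar> \<le> C * \<bar>t - s\<bar> powr lam"
proof -
  obtain C where C: "\<forall>s\<in>S. \<forall>t\<in>S. \<bar>g t - g s\<bar> \<le> C * \<bar>t - s\<bar> powr lam"
    using assms unfolding holder_on_def by blast
  have "C * \<bar>t - s\<bar> powr lam \<le> max C 0 * \<bar>t - s\<bar> powr lam" for s t :: real
    by (intro mult_right_mono) auto
  with C show thesis
    using that[of "max C 0"] by (meson max.cobounded2 order_trans)
qed

lemma holder_onI_ordered:
  assumes "\<And>s t. s \<in> S \<Longrightarrow> t \<in> S \<Longrightarrow> s \<le> t \<Longrightarrow> \<bar>g t - g s\<bar> \<le> C * \<bar>t - s\<bar> powr lam"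
  shows "holder_on lam S g"
  unfolding holder_on_def
proof (intro exI ballI)
  fix s t assume "s \<in> S" "t \<in> S"
  then show "\<bar>g t - g s\<bar> \<le> C * \<bar>t - s\<bar> powr lam"
    using assms[of s t] assms[of t s] by (cases "s \<le> t") (auto simp: abs_minus_commute)
qed

lemma holder_on_interval_join:
  assumes h1: "holder_on lam {a..b} g" and h2: "holder_on lam {b..c} g"
    and "a \<le> b" "b \<le> c" "lam \<ge> 0"
  shows "holder_on lam {a..c} g"
proof -
  obtain C1 where C1: "C1 \<ge> 0" "\<forall>s\<in>{a..b}. \<forall>t\<in>{a..b}. \<bar>g t - g s\<bar> \<le> C1 * \<bar>t - s\<bar> powr lam"
    using holder_on_nonneg_const[OF h1] by blast
  obtain C2 where C2: "C2 \<ge> 0" "\<forall>s\<in>{b..c}. \<forall>t\<in>{b..c}. \<bar>g t - g s\<bar> \<le> C2 * \<bar>t - s\<bar> powr lam"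
    using holder_on_nonneg_const[OF h2] by blast
  show ?thesis
  proof (rule holder_onI_ordered[where C = "C1 + C2"])
    fix s t assume st: "s \<in> {a..c}" "t \<in> {a..c}" "s \<le> t"
    have p: "0 \<le> \<bar>t - s\<bar> powr lam" by simp
    consider "t \<le> b" | "b \<le> s" | "s \<le> b" "b \<le> t" by linarith
    then show "\<bar>g t - g s\<bar> \<le> (C1 + C2) * \<bar>t - s\<bar> powr lam"
    proof cases
      case 1
      then have "s \<in> {a..b}" "t \<in> {a..b}" using st by auto
      then have "\<bar>g t - g s\<bar> \<le> C1 * \<bar>t - s\<bar> powr lam" using C1(2) by blast
      also have "\<dots> \<le> (C1 + C2) * \<bar>t - s\<bar> powr lam" using C2(1) p by (intro mult_right_mono) auto
      finally show ?thesis .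
    next
      case 2
      then have "s \<in> {b..c}" "t \<in> {b..c}" using st by auto
      then have "\<bar>g t - g s\<bar> \<le> C2 * \<bar>t - s\<bar> powr lam" using C2(2) by blast
      also have "\<dots> \<le> (C1 + C2) * \<bar>t - s\<bar> powr lam" using C1(1) p by (intro mult_right_mono) auto
      finally show ?thesis .
    next
      case 3
      have "s \<in> {a..b}" "b \<in> {a..b}" "b \<in> {b..c}" "t \<in> {b..c}"
        using st 3 \<open>a \<le> b\<close> \<open>b \<le> c\<close> by auto
      then have "\<bar>g b - g s\<bar> \<le> C1 * \<bar>b - s\<bar> powr lam" "\<bar>g t - g b\<bar> \<le> C2 * \<bar>t - b\<bar> powr lam"
        using C1(2) C2(2) by blast+
      moreover have "C1 * \<bar>b - s\<bar> powr lam \<le> C1 * \<bar>t - s\<bar> powr lam"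
        "C2 * \<bar>t - b\<bar> powr lam \<le> C2 * \<bar>t - s\<bar> powr lam"
        using 3 C1(1) C2(1) \<open>lam \<ge> 0\<close> by (auto intro!: mult_left_mono powr_mono2)
      ultimately show ?thesis by (simp add: algebra_simps) linarith
    qed
  qed
qed

lemma holder_on_scaled_increments:
  assumes "holder_on lam S B"
    and "\<And>s t. s \<in> S \<Longrightarrow> t \<in> S \<Longrightarrow> X t - X s = c * (B t - B s)"
  shows "holder_on lam S X"
proof -
  obtain C where C: "C \<ge> 0" "\<forall>s\<in>S. \<forall>t\<in>S. \<bar>B t - B s\<bar> \<le> C * \<bar>t - s\<bar> powr lam"
    using holder_on_nonneg_const[OF assms(1)] by blast
  have "\<bar>X t - X s\<bar> \<le> (\<bar>c\<bar> * C) * \<bar>t - s\<bar> powr lam" if "s \<in> S" "t \<in> S" for s t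
    using assms(2)[OF that] C(2) that
    by (simp add: abs_mult mult.assoc mult_left_mono)
  then show ?thesis unfolding holder_on_def by blast
qed

lemma holder_on_seg:
  assumes "holder_on lam S X" and "(\<lambda>\<theta>. u + \<theta>) ` T \<subseteq> S"
  shows "holder_on lam T (seg X u)"
proof -
  obtain C where C: "\<forall>s\<in>S. \<forall>t\<in>S. \<bar>X t - X s\<bar> \<le> C * \<bar>t - s\<bar> powr lam"
    using assms(1) unfolding holder_on_def by blast
  have "\<bar>seg X u t - seg X u s\<bar> \<le> C * \<bar>t - s\<bar> powr lam" if "s \<in> T" "t \<in> T" for s t
  proof -
    have "u + s \<in> S" "u + t \<in> S" using assms(2) that by auto
    with C show ?thesis unfolding seg_def by fastforce
  qed
  then show ?thesis unfolding holder_on_def by blast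
qed

lemma holder_seminorm_bound:
  assumes "holder_on lam S g" "s \<in> S" "t \<in> S"
  shows "\<bar>g t - g s\<bar> \<le> holder_seminorm lam S g * \<bar>t - s\<bar> powr lam"
proof (cases "s = t")
  case False
  define Q where "Q = {\<bar>g t - g s\<bar> / \<bar>t - s\<bar> powr lam | s t. s \<in> S \<and> t \<in> S \<and> s \<noteq> t}"
  obtain C where C: "\<forall>s\<in>S. \<forall>t\<in>S. \<bar>g t - g s\<bar> \<le> C * \<bar>t - s\<bar> powr lam"
    using assms(1) unfolding holder_on_def by blast
  have "bdd_above Q"
    by (rule bdd_aboveI[of _ C]) (use C in \<open>auto simp: Q_def divide_le_eq\<close>)
  moreover have "\<bar>g t - g s\<bar> / \<bar>t - s\<bar> powr lam \<in> Q"
    unfolding Q_def using assms False by blast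
  ultimately have "\<bar>g t - g s\<bar> / \<bar>t - s\<bar> powr lam \<le> holder_seminorm lam S g"
    unfolding holder_seminorm_def Q_def[symmetric] by (simp add: cSup_upper)
  with False show ?thesis by (simp add: divide_le_eq)
qed simp

lemma holder_seminorm_nonneg:
  assumes "holder_on lam S g" "s \<in> S" "t \<in> S" "s \<noteq> t"
  shows "0 \<le> holder_seminorm lam S g"
proof -
  have "0 \<le> holder_seminorm lam S g * \<bar>t - s\<bar> powr lam"
    using holder_seminorm_bound[OF assms(1-3)] by (rule order_trans[OF abs_ge_zero])
  moreover have "0 < \<bar>t - s\<bar> powr lam" using assms(4) by simp
  ultimately show ?thesis by (simp add: zero_le_mult_iff)
qed

lemma holder_seminorm_bound_superinterval:
  assumes "holder_on lam S g" "s \<in> S" "u \<in> S" "t \<in> S" "s \<le> u" "u \<le> t" "lam \<ge> 0"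
  shows "\<bar>g t - g u\<bar> \<le> holder_seminorm lam S g * \<bar>t - s\<bar> powr lam"
proof (cases "u = t")
  case False
  have "\<bar>g t - g u\<bar> \<le> holder_seminorm lam S g * \<bar>t - u\<bar> powr lam"
    using holder_seminorm_bound assms by blast
  also have "\<dots> \<le> holder_seminorm lam S g * \<bar>t - s\<bar> powr lam"
    using holder_seminorm_nonneg[OF assms(1,3,4) False] assms(5-7)
    by (intro mult_left_mono powr_mono2) auto
  finally show ?thesis .
qed (use holder_seminorm_nonneg assms in \<open>cases "s = t"; auto\<close>)

lemma euler_scheme_holder_on:
  assumes "holder_on lam {0..real n * D} B" "holder_on lam {a..0} X"
    and "a \<le> 0" "D > 0" "lam \<ge> 0"
    and "\<And>k t. k < n \<Longrightarrow> t \<in> {real k * D..real (Suc k) * D} \<Longrightarrow>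
           X t = X (real k * D) + c k * (B t - B (real k * D))"
  shows "holder_on lam {a..real n * D} X"
  using assms(1,6)
proof (induction n)
  case 0
  show ?case using assms(2) by simp
next
  case (Suc m)
  have step: "{real m * D..real (Suc m) * D} \<subseteq> {0..real (Suc m) * D}"
    and init: "{0..real m * D} \<subseteq> {0..real (Suc m) * D}"
    using \<open>D > 0\<close> by auto
  have "holder_on lam {a..real m * D} X"
  proof (rule Suc.IH)
    show "holder_on lam {0..real m * D} B"
      using holder_on_subset[OF Suc.prems(1) init] .
  qed (rule Suc.prems(2); simp)
  moreover have "holder_on lam {real m * D..real (Suc m) * D} X"
  proof (rule holder_on_scaled_increments[where c = "c m"])
    show "holder_on lam {real m * D..real (Suc m) * D} B"
      using holder_on_subset[OF Suc.prems(1) step] .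
    fix s t assume "s \<in> {real m * D..real (Suc m) * D}" "t \<in> {real m * D..real (Suc m) * D}"
    then have "X s = X (real m * D) + c m * (B s - B (real m * D))"
      and "X t = X (real m * D) + c m * (B t - B (real m * D))"
      using Suc.prems(2)[OF lessI] by blast+
    then show "X t - X s = c m * (B t - B s)" by (simp add: algebra_simps)
  qed
  moreover have "a \<le> real m * D" "real m * D \<le> real (Suc m) * D"
    using \<open>a \<le> 0\<close> \<open>D > 0\<close> by (auto intro: order_trans[of a 0])
  ultimately show ?case
    using \<open>lam \<ge> 0\<close> by (rule holder_on_interval_join)
qed

theorem lemma2:
  fixes tau H lam M1 :: real and n :: nat
    and B \<xi> X :: "real \<Rightarrow> real" and f :: "(real \<Rightarrow> real) \<Rightarrow> real"
  assumes tau: "tau > 0"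
    and H: "1/2 < H" "H < 1"
    and lam: "1/2 < lam" "lam < H"
    and B_holder: "holder_on lam {0..tau} B"
    and xi_holder: "holder_on lam {-tau..0} \<xi>"
    and M1: "M1 > 0"
    and f_lip: "\<And>\<psi>1 \<psi>2. holder_on lam {-tau..0} \<psi>1 \<Longrightarrow> holder_on lam {-tau..0} \<psi>2 \<Longrightarrow>
                  \<bar>f \<psi>2 - f \<psi>1\<bar> \<le> M1 * supnorm tau (\<lambda>\<theta>. \<psi>2 \<theta> - \<psi>1 \<theta>)"
    and n: "real n > tau"
    and X_init: "\<And>t. t \<in> {-tau..0} \<Longrightarrow> X t = \<xi> t"
    and X_step: "\<And>k t. k < n \<Longrightarrow> t \<in> {real k * (tau / real n) .. real (Suc k) * (tau / real n)} \<Longrightarrow>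
                  X t = X (real k * (tau / real n))
                        + f (seg X (real k * (tau / real n))) * (B t - B (real k * (tau / real n)))"
    and ijk: "i \<le> j" "j \<le> k" "k \<le> n"
  shows "\<bar>remR f B X (real i * (tau / real n)) (real k * (tau / real n))
          - remR f B X (real i * (tau / real n)) (real j * (tau / real n))
          - remR f B X (real j * (tau / real n)) (real k * (tau / real n))\<bar>
         \<le> M1 * supnorm tau (\<lambda>\<theta>. seg X (real j * (tau / real n)) \<theta> - seg X (real i * (tau / real n)) \<theta>)
              * holder_seminorm lam {0..tau} B
              * \<bar>real k * (tau / real n) - real i * (tau / real n)\<bar> powr lam"
proof -
  define D where "D = tau / real n"
  have D: "D > 0" "real n * D = tau"
    using tau n unfolding D_def by auto
  have grid: "0 \<le> real m * D \<and> real m * D \<le> tau" if "m \<le> n" for m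
    using D that mult_right_mono[of "real m" "real n" D] by simp
  have X_holder: "holder_on lam {-tau..real n * D} X"
  proof (rule euler_scheme_holder_on[where c = "\<lambda>k. f (seg X (real k * D))"])
    show "holder_on lam {0..real n * D} B" using B_holder D(2) by simp
    show "holder_on lam {-tau..0} X"
      using xi_holder X_init unfolding holder_on_def by simp
    show "X t = X (real k * D) + f (seg X (real k * D)) * (B t - B (real k * D))"
      if "k < n" "t \<in> {real k * D..real (Suc k) * D}" for k t
      using X_step[OF that[unfolded D_def]] unfolding D_def .
  qed (use tau lam D in auto)
  have seg_holder: "holder_on lam {-tau..0} (seg X (real m * D))" if "m \<le> n" for m
    using grid[OF that] D(2) by (intro holder_on_seg[OF X_holder]) auto
  have "\<bar>f (seg X (real j * D)) - f (seg X (real i * D))\<bar>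
      \<le> M1 * supnorm tau (\<lambda>\<theta>. seg X (real j * D) \<theta> - seg X (real i * D) \<theta>)"
    using ijk by (intro f_lip seg_holder) auto
  moreover have "\<bar>B (real k * D) - B (real j * D)\<bar>
      \<le> holder_seminorm lam {0..tau} B * \<bar>real k * D - real i * D\<bar> powr lam"
    using ijk grid[of i] grid[of j] grid[of k] D lam
    by (intro holder_seminorm_bound_superinterval[OF B_holder]) (auto intro: mult_right_mono)
  ultimately have "\<bar>(f (seg X (real j * D)) - f (seg X (real i * D))) * (B (real k * D) - B (real j * D))\<bar>
      \<le> M1 * supnorm tau (\<lambda>\<theta>. seg X (real j * D) \<theta> - seg X (real i * D) \<theta>)
         * (holder_seminorm lam {0..tau} B * \<bar>real k * D - real i * D\<bar> powr lam)"
    unfolding abs_mult by (intro mult_mono) auto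
  then show ?thesis
    unfolding remR_three_point D_def[symmetric] by (simp add: mult.assoc)
qed

end
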